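(* Let $\alpha>1$. (i) Let $\nu$ be a class (i) or class (ii) distribution with density $f=e^{-\varphi}$, where $f$ is bounded. Let $\eta$ be another distribution with density $g=e^{-\gamma}$. Suppose that $\lim_{x\to\infty}\varphi(x)/\gamma(x)$ exists and that $g/f$ is bounded on every compact interval. Then $\lim_{x\to\infty}\gamma(x)/\varphi(x)>\frac{\alpha-1}{\alpha}$ implies $D_\alpha(\eta|\nu)<\infty$, and $\lim_{x\to\infty}\gamma(x)/\varphi(x)<\frac{\alpha-1}{\alpha}$ implies $D_\alpha(\eta|\nu)=\infty$. (ii) Let $\nu$ be a class (iii) distribution with density $f=e^{-\varphi}$, where $f$ is bounded and $\lim_{x\to\infty}\varphi(x)/\log(x)=c>1$. Let $\eta$ be another distribution with density $g=e^{-\gamma}$. Suppose that $\lim_{x\to\infty}\varphi(x)/\gamma(x)$ exists and that $g/f$ is bounded on every compact interval. Then $\lim_{x\to\infty}\gamma(x)/\varphi(x)>\frac{\alpha-1}{\alpha}+\frac{1}{c\alpha}$ implies $D_\alpha(\eta|\nu)<\infty$, and $\lim_{x\to\infty}\gamma(x)/\varphi(x)<\frac{\alpha-1}{\alpha}+\frac{1}{c\alpha}$ implies $D_\alpha(\eta|\nu)=\infty$.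
   Context: Distributions are probability distributions on $[0,\infty)$ with continuous densities written $f=\exp(-\varphi)$, $g=\exp(-\gamma)$, positive above some threshold. The $\alpha$-divergence ($\alpha>0,\alpha\ne1$) is the $F$-divergence $D_\alpha(\eta|\nu)=\int_0^\infty F(g/f)f\,dx$ with $F(y)=\frac{y^\alpha-1}{\alpha(\alpha-1)}$ (and $+\infty$ if $\eta$ is not absolutely continuous w.r.t. $\nu$). Classes: $\nu$ is class (i) if there is $c>0$ with $\lim_{x\to\infty}\varphi(x)/x>c$. $\nu$ is class (ii) if $\lim_{x\to\infty}\varphi(x)/x=0$, $\lim_{x\to\infty}\varphi(x)/\log x=\infty$, and there exists $\Phi:\mathbb R_+\to\mathbb R$ and $\bar x>0$ such that $\Phi$ is positive, strictly concave, twice differentiable and increasing on $[\bar x,\infty)$, and, with $\Phi^{-1}$ the inverse of $\Phi|_{[\bar x,\infty)}$, $\liminf_{x\to\infty}\Phi^{-1}(\varphi(x))/x>0$ and $\limsup_{x\to\infty}\Phi^{-1}(\varphi(x))/x<\infty$. $\nu$ is class (iii) if $\lim_{x\to\infty}\varphi(x)/\log(x)=c$ for some $c<\infty$. *)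

theory Defs
  imports "HOL-Analysis.Analysis"
begin

text \<open>A distribution on [0,oo) given by a continuous density f, positive above some threshold.
  Values of f on negative reals are irrelevant.\<close>
definition is_density :: "(real \<Rightarrow> real) \<Rightarrow> bool" where
  "is_density f \<longleftrightarrow> continuous_on {0..} f \<and> (\<forall>x\<ge>0. 0 \<le> f x) \<and>
     (f has_integral 1) {0..} \<and> (\<exists>x0. \<forall>x\<ge>x0. 0 < f x)"

text \<open>The potential phi with f = exp(-phi) (meaningful where f > 0).\<close>
definition pot :: "(real \<Rightarrow> real) \<Rightarrow> real \<Rightarrow> real" where
  "pot f x = - ln (f x)"

definition dist_measure :: "(real \<Rightarrow> real) \<Rightarrow> real measure" where
  "dist_measure f = density lborel (\<lambda>x. ennreal (indicator {0..} x * f x))"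

definition F_alpha :: "real \<Rightarrow> real \<Rightarrow> real" where
  "F_alpha a y = (y powr a - 1) / (a * (a - 1))"

text \<open>alpha_div a g f = D_a(eta | nu), where eta has density g and nu has density f.
  The integral of F(g/f) f over [0,oo) is taken as (positive part) - (negative part)
  in the extended reals; it is +oo if eta is not absolutely continuous w.r.t. nu.
  On the set where f = 0 the integrand is 0 (Isabelle: g/0 = 0, times f = 0).\<close>
definition alpha_div :: "real \<Rightarrow> (real \<Rightarrow> real) \<Rightarrow> (real \<Rightarrow> real) \<Rightarrow> ereal" where
  "alpha_div a g f =
    (if absolutely_continuous (dist_measure f) (dist_measure g) then
       enn2ereal (\<integral>\<^sup>+ x\<in>{0..}. ennreal (max 0 (F_alpha a (g x / f x) * f x)) \<partial>lborel)
       - enn2ereal (\<integral>\<^sup>+ x\<in>{0..}. ennreal (max 0 (- (F_alpha a (g x / f x) * f x))) \<partial>lborel)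
     else \<infinity>)"

definition strictly_concave_on :: "real set \<Rightarrow> (real \<Rightarrow> real) \<Rightarrow> bool" where
  "strictly_concave_on S h \<longleftrightarrow>
     (\<forall>x\<in>S. \<forall>y\<in>S. \<forall>t::real. x \<noteq> y \<and> 0 < t \<and> t < 1 \<longrightarrow>
        t * h x + (1 - t) * h y < h (t * x + (1 - t) * y))"

definition class_i :: "(real \<Rightarrow> real) \<Rightarrow> bool" where
  "class_i f \<longleftrightarrow> (\<exists>c>0. \<exists>l::ereal.
     ((\<lambda>x. ereal (pot f x / x)) \<longlongrightarrow> l) at_top \<and> l > ereal c)"

definition class_ii :: "(real \<Rightarrow> real) \<Rightarrow> bool" where
  "class_ii f \<longleftrightarrow>
     ((\<lambda>x. pot f x / x) \<longlongrightarrow> 0) at_top \<and>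
     filterlim (\<lambda>x. pot f x / ln x) at_top at_top \<and>
     (\<exists>(\<Phi>::real \<Rightarrow> real) xbar. xbar > 0 \<and>
        (\<forall>x\<ge>xbar. 0 < \<Phi> x) \<and>
        strictly_concave_on {xbar..} \<Phi> \<and>
        (\<exists>\<Phi>' \<Phi>''. \<forall>x\<ge>xbar. (\<Phi> has_real_derivative \<Phi>' x) (at x within {xbar..}) \<and>
                               (\<Phi>' has_real_derivative \<Phi>'' x) (at x within {xbar..})) \<and>
        mono_on {xbar..} \<Phi> \<and>
        Liminf at_top (\<lambda>x. ereal (the_inv_into {xbar..} \<Phi> (pot f x) / x)) > 0 \<and>
        Limsup at_top (\<lambda>x. ereal (the_inv_into {xbar..} \<Phi> (pot f x) / x)) < \<infinity>)"

definition class_iii :: "(real \<Rightarrow> real) \<Rightarrow> bool" where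
  "class_iii f \<longleftrightarrow> (\<exists>c::real. ((\<lambda>x. pot f x / ln x) \<longlongrightarrow> c) at_top)"

text \<open>g/f bounded on every compact interval of [0,oo) (with g/f = oo where f = 0 < g).\<close>
definition ratio_locally_bounded :: "(real \<Rightarrow> real) \<Rightarrow> (real \<Rightarrow> real) \<Rightarrow> bool" where
  "ratio_locally_bounded g f \<longleftrightarrow>
     (\<forall>a b. 0 \<le> a \<longrightarrow> (\<exists>M. \<forall>x\<in>{a..b}. g x \<le> M * f x))"

end

theory Submission
  imports Defs "HOL-Real_Asymp.Real_Asymp"
begin

text \<open>Where \<open>f, g > 0\<close> the integrand of \<open>D\<^sub>\<alpha>\<close> is \<open>F(g/f) f = (e\<^sup>-\<^sup>\<psi> - f) / (\<alpha>(\<alpha>-1))\<close>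
  with \<open>\<psi> = \<alpha>\<gamma> - (\<alpha>-1)\<phi>\<close>. Its negative part is at most \<open>f / (\<alpha>(\<alpha>-1))\<close>, hence always integrable,
  so everything depends on \<open>e\<^sup>-\<^sup>\<psi>\<close> at infinity: \<open>\<psi> \<ge> p log x\<close> with \<open>p > 1\<close> makes the divergence
  finite (near 0 one uses \<open>g \<le> M f\<close>), whereas \<open>\<psi> \<le> q log x\<close> with \<open>q < 1\<close> together with \<open>f \<le> 1/x\<close>
  bounds the integrand below by a multiple of \<open>1/x\<close>. Writing \<open>\<psi> = (\<alpha> \<gamma>/\<phi> - \<alpha> + 1) \<phi>\<close>, the
  comparison is decided by the coefficient \<open>\<alpha> l - \<alpha> + 1\<close> against \<open>\<phi> / log x\<close>, which tends to
  \<open>\<infinity>\<close> for classes (i) and (ii) and to \<open>c\<close> in part (ii).\<close>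

lemma eventually_gt_of_tendsto_ereal:
  assumes "((\<lambda>x. ereal (u x)) \<longlongrightarrow> l) F" "ereal t < l"
  obtains t' where "t < t'" "eventually (\<lambda>x. t' < u x) F"
proof -
  obtain z where z: "ereal t < ereal z" "ereal z < l"
    using ereal_dense2[OF assms(2)] by blast
  have "eventually (\<lambda>x. ereal z < ereal (u x)) F"
    by (rule order_tendstoD(1)[OF assms(1) z(2)])
  with z(1) that show ?thesis
    by simp
qed

lemma eventually_lt_of_tendsto_ereal:
  assumes "((\<lambda>x. ereal (u x)) \<longlongrightarrow> l) F" "l < ereal t"
  obtains t' where "t' < t" "eventually (\<lambda>x. u x < t') F"
proof -
  obtain z where z: "l < ereal z" "ereal z < ereal t"
    using ereal_dense2[OF assms(2)] by blast
  have "eventually (\<lambda>x. ereal (u x) < ereal z) F"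
    by (rule order_tendstoD(2)[OF assms(1) z(1)])
  with z(2) that show ?thesis
    by simp
qed

lemma nn_integral_less_top_of_le_has_integral:
  fixes u h :: "real \<Rightarrow> real"
  assumes "(h has_integral I) S" "\<And>x. x \<in> S \<Longrightarrow> 0 \<le> h x" "\<And>x. x \<in> S \<Longrightarrow> u x \<le> h x"
  shows "(\<integral>\<^sup>+ x\<in>S. ennreal (u x) \<partial>lborel) < \<infinity>"
proof -
  have "(\<integral>\<^sup>+ x\<in>S. ennreal (u x) \<partial>lborel) \<le> (\<integral>\<^sup>+ x\<in>S. ennreal (h x) \<partial>lborel)"
    using assms(3) by (intro nn_integral_mono) (simp add: ennreal_leI indicator_def)
  also have "\<dots> = ennreal I"
    using nn_integral_has_integral_lebesgue'[OF assms(2,1)] by simp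
  finally show ?thesis
    by (metis ennreal_less_top infinity_ennreal_def order_le_less_trans)
qed

lemma nn_integral_divide_atLeast_eq_top:
  assumes "0 < c" "0 < X"
  shows "(\<integral>\<^sup>+ x\<in>{X..}. ennreal (c / x) \<partial>lborel) = \<infinity>"
proof (rule ccontr)
  let ?I = "\<integral>\<^sup>+ x\<in>{X..}. ennreal (c / x) \<partial>lborel"
  assume "?I \<noteq> \<infinity>"
  then obtain r where r: "?I = ennreal r" "0 \<le> r"
    by (cases ?I rule: ennreal_cases) auto
  define Y where "Y = exp (r / c + ln X + 1)"
  have lnY: "ln Y = r / c + ln X + 1"
    unfolding Y_def by simp
  have "0 \<le> r / c + 1"
    using assms r(2) by simp
  then have XY: "X \<le> Y"
    using assms(2) ln_le_cancel_iff[of X Y] unfolding Y_def by simp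
  have "((\<lambda>x. c / x) has_integral (c * ln Y - c * ln X)) {X..Y}"
  proof (rule fundamental_theorem_of_calculus[OF XY])
    fix x assume "x \<in> {X..Y}"
    with assms have "x > 0" by auto
    then show "((\<lambda>x. c * ln x) has_vector_derivative c / x) (at x within {X..Y})"
      by (auto intro!: derivative_eq_intros simp flip: has_real_derivative_iff_has_vector_derivative)
  qed
  then have "(\<integral>\<^sup>+ x\<in>{X..Y}. ennreal (c / x) \<partial>lborel) = ennreal (c * ln Y - c * ln X)"
    using assms by (intro nn_integral_has_integral_lebesgue') auto
  moreover have "(\<integral>\<^sup>+ x\<in>{X..Y}. ennreal (c / x) \<partial>lborel) \<le> ?I"
    by (intro nn_integral_mono) (auto simp: indicator_def)
  ultimately have "c * ln Y - c * ln X \<le> r"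
    using r by (simp add: ennreal_le_iff)
  moreover have "c * ln Y - c * ln X = r + c"
    unfolding lnY using assms by (simp add: field_simps)
  ultimately show False
    using assms by simp
qed

lemma eventually_density_pos:
  "is_density f \<Longrightarrow> eventually (\<lambda>x. 0 < f x) at_top"
  unfolding is_density_def eventually_at_top_linorder by blast

lemma borel_measurable_density:
  assumes "is_density f"
  shows "(\<lambda>x. ennreal (indicator {0..} x * f x)) \<in> borel_measurable lborel"
proof -
  have "(\<lambda>x. indicator {0::real..} x *\<^sub>R f x) \<in> borel_measurable borel"
    using assms unfolding is_density_def by (intro borel_measurable_continuous_on_indicator) auto
  then show ?thesis
    by (simp add: measurable_compose[OF _ measurable_ennreal])
qed

lemma absolutely_continuous_dist_measure:
  assumes "is_density f" "is_density g" "ratio_locally_bounded g f"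
  shows "absolutely_continuous (dist_measure f) (dist_measure g)"
proof -
  have vanish: "ennreal (indicator {0..} x * g x) = 0" if "ennreal (indicator {0..} x * f x) = 0" for x
  proof (cases "x \<ge> 0")
    case True
    obtain M where "\<forall>y\<in>{0..x}. g y \<le> M * f y"
      using assms(3) unfolding ratio_locally_bounded_def by blast
    then have "g x \<le> M * f x"
      using True by simp
    moreover have "f x = 0" "g x \<ge> 0"
      using that True assms(1,2) unfolding is_density_def by auto
    ultimately show ?thesis
      by simp
  qed simp
  show ?thesis
    unfolding absolutely_continuous_def dist_measure_def
  proof
    fix A assume "A \<in> null_sets (density lborel (\<lambda>x. ennreal (indicator {0..} x * f x)))"
    then have "A \<in> sets lborel" "AE x in lborel. x \<in> A \<longrightarrow> ennreal (indicator {0..} x * f x) = 0"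
      using null_sets_density_iff[OF borel_measurable_density[OF assms(1)]] by auto
    then show "A \<in> null_sets (density lborel (\<lambda>x. ennreal (indicator {0..} x * g x)))"
      using null_sets_density_iff[OF borel_measurable_density[OF assms(2)]] vanish
      by (auto elim!: eventually_mono)
  qed
qed

text \<open>\<open>exp (- alpha_exponent a g f x) = g x powr a * f x powr (1 - a)\<close>.\<close>

definition alpha_exponent :: "real \<Rightarrow> (real \<Rightarrow> real) \<Rightarrow> (real \<Rightarrow> real) \<Rightarrow> real \<Rightarrow> real" where
  "alpha_exponent a g f x = a * pot g x - (a - 1) * pot f x"

definition alpha_div_pos :: "real \<Rightarrow> (real \<Rightarrow> real) \<Rightarrow> (real \<Rightarrow> real) \<Rightarrow> ennreal" where
  "alpha_div_pos a g f = (\<integral>\<^sup>+ x\<in>{0..}. ennreal (max 0 (F_alpha a (g x / f x) * f x)) \<partial>lborel)"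

definition alpha_div_neg :: "real \<Rightarrow> (real \<Rightarrow> real) \<Rightarrow> (real \<Rightarrow> real) \<Rightarrow> ennreal" where
  "alpha_div_neg a g f = (\<integral>\<^sup>+ x\<in>{0..}. ennreal (max 0 (- (F_alpha a (g x / f x) * f x))) \<partial>lborel)"

lemma alpha_div_eq:
  "alpha_div a g f = (if absolutely_continuous (dist_measure f) (dist_measure g)
     then enn2ereal (alpha_div_pos a g f) - enn2ereal (alpha_div_neg a g f) else \<infinity>)"
  unfolding alpha_div_def alpha_div_pos_def alpha_div_neg_def ..

lemma F_alpha_times_density_eq:
  assumes "0 < f x" "0 < g x"
  shows "F_alpha a (g x / f x) * f x = (exp (- alpha_exponent a g f x) - f x) / (a * (a - 1))"
proof -
  have "(g x / f x) powr a * f x = exp (a * (ln (g x) - ln (f x)) + ln (f x))"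
    using assms by (simp add: powr_def ln_div exp_add)
  also have "\<dots> = exp (- alpha_exponent a g f x)"
    unfolding alpha_exponent_def pot_def by (simp add: algebra_simps)
  finally show ?thesis
    unfolding F_alpha_def by (simp add: field_simps)
qed

lemma F_alpha_times_density_ge:
  assumes "a > 1" "0 \<le> f x"
  shows "- f x / (a * (a - 1)) \<le> F_alpha a (g x / f x) * f x"
proof -
  have "-1 \<le> (g x / f x) powr a - 1"
    by simp
  then have "-1 / (a * (a - 1)) \<le> F_alpha a (g x / f x)"
    unfolding F_alpha_def using assms(1) by (intro divide_right_mono) auto
  from mult_right_mono[OF this assms(2)] show ?thesis by simp
qed

lemma F_alpha_times_density_le:
  assumes "a > 1" "0 \<le> M" "0 \<le> f x" "0 \<le> g x" "g x \<le> M * f x"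
  shows "F_alpha a (g x / f x) * f x \<le> M powr a / (a * (a - 1)) * f x"
proof (cases "f x = 0")
  case False
  then have "g x / f x \<le> M"
    using assms(3,5) by (simp add: divide_le_eq mult.commute)
  then have "(g x / f x) powr a \<le> M powr a"
    using assms by (intro powr_mono2) auto
  then have "F_alpha a (g x / f x) \<le> M powr a / (a * (a - 1))"
    unfolding F_alpha_def using assms(1) by (simp add: divide_right_mono)
  from mult_right_mono[OF this assms(3)] show ?thesis .
qed simp

lemma F_alpha_times_density_le_powr:
  assumes "a > 1" "0 < x" "0 < f x" "0 < g x" "p * ln x \<le> alpha_exponent a g f x"
  shows "F_alpha a (g x / f x) * f x \<le> x powr - p / (a * (a - 1))"
proof -
  have "F_alpha a (g x / f x) * f x \<le> exp (- alpha_exponent a g f x) / (a * (a - 1))"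
    unfolding F_alpha_times_density_eq[where f = f and g = g and x = x, OF assms(3,4)]
    using assms(1,3) by (intro divide_right_mono) auto
  also have "\<dots> \<le> exp (- (p * ln x)) / (a * (a - 1))"
    using assms(1,5) by (intro divide_right_mono) auto
  also have "\<dots> = x powr - p / (a * (a - 1))"
    using assms(2) by (simp add: powr_def)
  finally show ?thesis .
qed

lemma F_alpha_times_density_ge_inverse:
  assumes "a > 1" "0 < x" "0 < f x" "0 < g x" "ln x \<le> pot f x"
    and "alpha_exponent a g f x \<le> q * ln x" "2 \<le> x powr (1 - q)"
  shows "1 / (a * (a - 1)) / x \<le> F_alpha a (g x / f x) * f x"
proof -
  have "f x = exp (- pot f x)"
    using assms(3) by (simp add: pot_def)
  also have "\<dots> \<le> exp (- ln x)"
    using assms(5) by simp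
  finally have f_le: "f x \<le> 1 / x"
    using assms(2) by (simp add: exp_minus inverse_eq_divide)
  have "2 / x \<le> x powr (1 - q) / x"
    using assms(2,7) by (simp add: divide_right_mono)
  also have "\<dots> = 1 / x powr q"
    using assms(2) by (simp add: powr_diff)
  also have "\<dots> = exp (- (q * ln x))"
    using assms(2) by (simp add: powr_def exp_minus inverse_eq_divide)
  also have "\<dots> \<le> exp (- alpha_exponent a g f x)"
    using assms(6) by simp
  finally have "1 / x \<le> exp (- alpha_exponent a g f x) - f x"
    using f_le by simp
  then have "1 / x / (a * (a - 1)) \<le> F_alpha a (g x / f x) * f x"
    unfolding F_alpha_times_density_eq[where f = f and g = g and x = x, OF assms(3,4)]
    using assms(1) by (intro divide_right_mono) auto
  then show ?thesis
    by (simp add: mult.commute)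
qed

lemma alpha_exponent_ge:
  assumes "a \<ge> 0" "0 < pot f x" "t \<le> pot g x / pot f x"
  shows "(a * t - a + 1) * pot f x \<le> alpha_exponent a g f x"
proof -
  have "t * pot f x \<le> pot g x"
    using assms(2,3) by (simp add: pos_le_divide_eq)
  from mult_left_mono[OF this assms(1)] show ?thesis
    unfolding alpha_exponent_def by (simp add: algebra_simps)
qed

lemma alpha_exponent_le:
  assumes "a \<ge> 0" "0 < pot f x" "pot g x / pot f x \<le> t"
  shows "alpha_exponent a g f x \<le> (a * t - a + 1) * pot f x"
proof -
  have "pot g x \<le> t * pot f x"
    using assms(2,3) by (simp add: pos_divide_le_eq)
  from mult_left_mono[OF this assms(1)] show ?thesis
    unfolding alpha_exponent_def by (simp add: algebra_simps)
qed

lemma alpha_div_neg_le: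
  assumes "a > 1" "is_density f"
  shows "alpha_div_neg a g f \<le> ennreal (1 / (a * (a - 1)))"
proof -
  have f: "(f has_integral 1) {0..}" "\<And>x. x \<ge> 0 \<Longrightarrow> f x \<ge> 0"
    using assms(2) unfolding is_density_def by auto
  have "alpha_div_neg a g f \<le> (\<integral>\<^sup>+ x\<in>{0..}. ennreal (f x / (a * (a - 1))) \<partial>lborel)"
    unfolding alpha_div_neg_def
  proof (intro nn_integral_mono)
    fix x :: real
    have "max 0 (- (F_alpha a (g x / f x) * f x)) \<le> f x / (a * (a - 1))" if "x \<ge> 0"
      using F_alpha_times_density_ge[of a f x g, OF assms(1) f(2)[OF that]] assms(1) f(2)[OF that] by simp
    then show "ennreal (max 0 (- (F_alpha a (g x / f x) * f x))) * indicator {0..} x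
        \<le> ennreal (f x / (a * (a - 1))) * indicator {0..} x"
      by (simp add: indicator_def ennreal_leI)
  qed
  also have "\<dots> = ennreal (1 / (a * (a - 1)))"
    using assms(1) f has_integral_divide[OF f(1), of "a * (a - 1)"]
    by (intro nn_integral_has_integral_lebesgue') auto
  finally show ?thesis .
qed

lemma alpha_div_neg_less_top:
  assumes "a > 1" "is_density f"
  shows "alpha_div_neg a g f < \<infinity>"
  using alpha_div_neg_le[OF assms]
  by (metis ennreal_less_top infinity_ennreal_def order_le_less_trans)

lemma alpha_div_pos_less_top:
  assumes a: "a > 1" and f: "is_density f" and g: "is_density g" and ratio: "ratio_locally_bounded g f"
    and p: "p > 1" and exponent: "eventually (\<lambda>x. p * ln x \<le> alpha_exponent a g f x) at_top"
  shows "alpha_div_pos a g f < \<infinity>"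
proof -
  have "eventually (\<lambda>x. 1 \<le> x \<and> 0 < f x \<and> 0 < g x \<and> p * ln x \<le> alpha_exponent a g f x) at_top"
    using eventually_ge_at_top[of 1] eventually_density_pos[OF f] eventually_density_pos[OF g] exponent
    by eventually_elim blast
  then obtain X where X: "\<And>x. x \<ge> X \<Longrightarrow> 1 \<le> x \<and> 0 < f x \<and> 0 < g x \<and> p * ln x \<le> alpha_exponent a g f x"
    by (auto simp: eventually_at_top_linorder)
  have "X \<ge> 1"
    using X by blast
  obtain M where M: "\<forall>x\<in>{0..X}. g x \<le> M * f x"
    using ratio unfolding ratio_locally_bounded_def by blast
  have f_int: "(f has_integral 1) {0..}" and f_nonneg: "\<And>x. x \<ge> 0 \<Longrightarrow> 0 \<le> f x"
    and g_nonneg: "\<And>x. x \<ge> 0 \<Longrightarrow> 0 \<le> g x"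
    using f g unfolding is_density_def by auto
  define C where "C = max M 0 powr a / (a * (a - 1))"
  define h where "h x = C * f x + (if x \<in> {X..} then x powr - p / (a * (a - 1)) else 0)" for x
  have "((\<lambda>x. x powr - p) has_integral X powr (1 - p) / (p - 1)) {X..}"
    using has_integral_powr_to_inf[of "- p" X] p \<open>X \<ge> 1\<close> by (simp add: minus_divide_right)
  then have "((\<lambda>x. x powr - p / (a * (a - 1))) has_integral X powr (1 - p) / (p - 1) / (a * (a - 1))) {X..}"
    by (rule has_integral_divide)
  then have "((\<lambda>x. if x \<in> {X..} then x powr - p / (a * (a - 1)) else 0)
      has_integral X powr (1 - p) / (p - 1) / (a * (a - 1))) {0..}"
    using \<open>X \<ge> 1\<close> by (subst has_integral_restrict) auto
  then have h_int: "(h has_integral C + X powr (1 - p) / (p - 1) / (a * (a - 1))) {0..}"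
    unfolding h_def using has_integral_add[OF has_integral_mult_right[OF f_int, of C]] by simp
  show ?thesis
    unfolding alpha_div_pos_def
  proof (rule nn_integral_less_top_of_le_has_integral[OF h_int])
    fix x :: real assume "x \<in> {0..}"
    then have x: "0 \<le> x" by simp
    have C: "0 \<le> C"
      using a by (simp add: C_def)
    show "0 \<le> h x"
      using a C f_nonneg[OF x] by (simp add: h_def)
    show "max 0 (F_alpha a (g x / f x) * f x) \<le> h x"
    proof (cases "x \<le> X")
      case True
      have "g x \<le> M * f x"
        using M True x by simp
      also have "\<dots> \<le> max M 0 * f x"
        using f_nonneg[OF x] by (intro mult_right_mono) auto
      finally have "g x \<le> max M 0 * f x" .
      then have "F_alpha a (g x / f x) * f x \<le> C * f x"
        unfolding C_def using a f_nonneg[OF x] g_nonneg[OF x] by (intro F_alpha_times_density_le) auto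
      moreover have "C * f x \<le> h x"
        using True a by (auto simp: h_def)
      ultimately show ?thesis
        using mult_nonneg_nonneg[OF C f_nonneg[OF x]] by (auto intro!: max.boundedI)
    next
      case False
      then have "F_alpha a (g x / f x) * f x \<le> x powr - p / (a * (a - 1))"
        using X[of x] by (intro F_alpha_times_density_le_powr[OF a]) auto
      then show ?thesis
        using mult_nonneg_nonneg[OF C f_nonneg[OF x]] a False by (auto simp: h_def intro!: max.boundedI)
    qed
  qed
qed

lemma alpha_div_pos_eq_top:
  assumes a: "a > 1" and f: "is_density f" and g: "is_density g" and q: "q < 1"
    and pot_f: "eventually (\<lambda>x. ln x \<le> pot f x) at_top"
    and exponent: "eventually (\<lambda>x. alpha_exponent a g f x \<le> q * ln x) at_top"
  shows "alpha_div_pos a g f = \<infinity>"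
proof -
  have "eventually (\<lambda>x. 2 \<le> x powr (1 - q)) at_top"
    using q by real_asymp
  then have "eventually (\<lambda>x. 1 \<le> x \<and> 0 < f x \<and> 0 < g x \<and> ln x \<le> pot f x \<and>
      alpha_exponent a g f x \<le> q * ln x \<and> 2 \<le> x powr (1 - q)) at_top"
    using eventually_ge_at_top[of 1] eventually_density_pos[OF f] eventually_density_pos[OF g]
      pot_f exponent
    by eventually_elim blast
  then obtain X where X: "\<And>x. x \<ge> X \<Longrightarrow> 1 \<le> x \<and> 0 < f x \<and> 0 < g x \<and> ln x \<le> pot f x \<and>
      alpha_exponent a g f x \<le> q * ln x \<and> 2 \<le> x powr (1 - q)"
    by (auto simp: eventually_at_top_linorder)
  have "(\<integral>\<^sup>+ x\<in>{X..}. ennreal (1 / (a * (a - 1)) / x) \<partial>lborel) \<le> alpha_div_pos a g f"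
    unfolding alpha_div_pos_def
  proof (intro nn_integral_mono)
    fix x :: real
    show "ennreal (1 / (a * (a - 1)) / x) * indicator {X..} x
        \<le> ennreal (max 0 (F_alpha a (g x / f x) * f x)) * indicator {0..} x"
    proof (cases "x \<ge> X")
      case True
      then have "1 / (a * (a - 1)) / x \<le> F_alpha a (g x / f x) * f x"
        using X[OF True] by (intro F_alpha_times_density_ge_inverse[OF a]) auto
      then show ?thesis
        using True X[OF True] by (simp add: ennreal_leI)
    qed simp
  qed
  then show ?thesis
    using nn_integral_divide_atLeast_eq_top[of "1 / (a * (a - 1))" X] a X[of X]
    by (simp add: top_unique)
qed

lemma alpha_div_less_top_of_exponent_ge:
  assumes "a > 1" "is_density f" "is_density g" "ratio_locally_bounded g f"
    and "p > 1" "eventually (\<lambda>x. p * ln x \<le> alpha_exponent a g f x) at_top"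
  shows "alpha_div a g f < \<infinity>"
proof -
  obtain r where "alpha_div_pos a g f = ennreal r" "0 \<le> r"
    using alpha_div_pos_less_top[OF assms] by (cases "alpha_div_pos a g f" rule: ennreal_cases) auto
  moreover have "ereal r - enn2ereal (alpha_div_neg a g f) < \<infinity>"
    by (cases "enn2ereal (alpha_div_neg a g f)") auto
  ultimately show ?thesis
    unfolding alpha_div_eq using absolutely_continuous_dist_measure[OF assms(2-4)] by simp
qed

lemma alpha_div_eq_top_of_exponent_le:
  assumes "a > 1" "is_density f" "is_density g" "q < 1"
    and "eventually (\<lambda>x. ln x \<le> pot f x) at_top"
    and "eventually (\<lambda>x. alpha_exponent a g f x \<le> q * ln x) at_top"
  shows "alpha_div a g f = \<infinity>"
proof -
  have "enn2ereal (alpha_div_neg a g f) \<noteq> \<infinity>"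
    using alpha_div_neg_less_top[OF assms(1,2), of g] by simp
  then show ?thesis
    unfolding alpha_div_eq using alpha_div_pos_eq_top[OF assms] by simp
qed

lemma filterlim_pot_over_ln_at_top:
  assumes "class_i f \<or> class_ii f"
  shows "filterlim (\<lambda>x. pot f x / ln x) at_top at_top"
  using assms
proof
  assume "class_i f"
  then obtain c l where c: "c > 0" "((\<lambda>x. ereal (pot f x / x)) \<longlongrightarrow> l) at_top" "ereal c < l"
    unfolding class_i_def by blast
  have linear: "eventually (\<lambda>x. c < pot f x / x) at_top"
    using order_tendstoD(1)[OF c(2,3)] by simp
  show ?thesis
    unfolding filterlim_at_top
  proof
    fix K :: real
    have "eventually (\<lambda>x. K * ln x < c * x) at_top"
      using c(1) by real_asymp
    with linear eventually_gt_at_top[of 1] show "eventually (\<lambda>x. K \<le> pot f x / ln x) at_top"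
    proof eventually_elim
      case (elim x)
      then have "K * ln x < pot f x"
        by (simp add: pos_less_divide_eq mult.commute)
      moreover have "0 < ln x"
        using elim(2) by simp
      ultimately show ?case
        by (simp add: pos_le_divide_eq)
    qed
  qed
next
  assume "class_ii f"
  then show ?thesis
    unfolding class_ii_def by blast
qed

lemma alpha_div_less_top_if_pot_over_ln_at_top:
  assumes a: "a > 1" and f: "is_density f" and g: "is_density g" and ratio: "ratio_locally_bounded g f"
    and superlog: "filterlim (\<lambda>x. pot f x / ln x) at_top at_top"
    and lim: "((\<lambda>x. ereal (pot g x / pot f x)) \<longlongrightarrow> l) at_top" and l: "ereal ((a - 1) / a) < l"
  shows "alpha_div a g f < \<infinity>"
proof -
  obtain t where t: "(a - 1) / a < t" "eventually (\<lambda>x. t < pot g x / pot f x) at_top"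
    using eventually_gt_of_tendsto_ereal[OF lim l] by blast
  define k where "k = a * t - a + 1"
  have k: "k > 0"
    using t(1) a by (simp add: k_def field_simps)
  have "eventually (\<lambda>x. 2 / k \<le> pot f x / ln x) at_top"
    using superlog by (simp add: filterlim_at_top)
  with t(2) eventually_gt_at_top[of 1]
  have "eventually (\<lambda>x. 2 * ln x \<le> alpha_exponent a g f x) at_top"
  proof eventually_elim
    case (elim x)
    then have ln: "0 < ln x"
      by simp
    with elim(3) have lower: "2 / k * ln x \<le> pot f x"
      by (simp add: pos_le_divide_eq)
    moreover have "0 < 2 / k * ln x"
      using k ln by simp
    ultimately have pos: "0 < pot f x"
      by linarith
    have "2 * ln x \<le> k * pot f x"
      using mult_left_mono[OF lower, of k] k by simp
    also have "k * pot f x \<le> alpha_exponent a g f x"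
      unfolding k_def using a pos elim(1) by (intro alpha_exponent_ge) auto
    finally show ?case .
  qed
  from alpha_div_less_top_of_exponent_ge[OF a f g ratio _ this] show ?thesis
    by simp
qed

lemma alpha_div_eq_top_if_pot_over_ln_at_top:
  assumes a: "a > 1" and f: "is_density f" and g: "is_density g"
    and superlog: "filterlim (\<lambda>x. pot f x / ln x) at_top at_top"
    and lim: "((\<lambda>x. ereal (pot g x / pot f x)) \<longlongrightarrow> l) at_top" and l: "l < ereal ((a - 1) / a)"
  shows "alpha_div a g f = \<infinity>"
proof -
  obtain t where t: "t < (a - 1) / a" "eventually (\<lambda>x. pot g x / pot f x < t) at_top"
    using eventually_lt_of_tendsto_ereal[OF lim l] by blast
  have k: "a * t - a + 1 < 0"
    using t(1) a by (simp add: field_simps)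
  have "eventually (\<lambda>x. 1 \<le> pot f x / ln x) at_top"
    using superlog by (simp add: filterlim_at_top)
  with eventually_gt_at_top[of 1]
  have pot_f: "eventually (\<lambda>x. ln x \<le> pot f x) at_top"
    by eventually_elim (simp add: pos_le_divide_eq)
  from pot_f t(2) eventually_gt_at_top[of 1]
  have "eventually (\<lambda>x. alpha_exponent a g f x \<le> 0 * ln x) at_top"
  proof eventually_elim
    case (elim x)
    then have pos: "0 < pot f x"
      using ln_gt_zero[of x] by linarith
    have "alpha_exponent a g f x \<le> (a * t - a + 1) * pot f x"
      using a pos elim(2) by (intro alpha_exponent_le) auto
    also have "\<dots> \<le> 0"
      using k pos by (simp add: mult_nonpos_nonneg)
    finally show ?case
      by simp
  qed
  from alpha_div_eq_top_of_exponent_le[OF a f g _ pot_f this] show ?thesis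
    by simp
qed

lemma alpha_div_less_top_if_pot_over_ln_tendsto:
  assumes a: "a > 1" and f: "is_density f" and g: "is_density g" and ratio: "ratio_locally_bounded g f"
    and c: "c > 1" and log: "((\<lambda>x. pot f x / ln x) \<longlongrightarrow> c) at_top"
    and lim: "((\<lambda>x. ereal (pot g x / pot f x)) \<longlongrightarrow> l) at_top"
    and l: "ereal ((a - 1) / a + 1 / (c * a)) < l"
  shows "alpha_div a g f < \<infinity>"
proof -
  obtain t where t: "(a - 1) / a + 1 / (c * a) < t" "eventually (\<lambda>x. t < pot g x / pot f x) at_top"
    using eventually_gt_of_tendsto_ereal[OF lim l] by blast
  define k where "k = a * t - a + 1"
  have kc: "k * c > 1"
    using t(1) a c by (simp add: k_def field_simps)
  obtain p where p: "1 < p" "p < k * c"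
    using dense[OF kc] by blast
  have "eventually (\<lambda>x. p < k * (pot f x / ln x)) at_top"
    using order_tendstoD(1)[OF tendsto_mult_left[OF log, of k] p(2)] .
  moreover have "eventually (\<lambda>x. 0 < pot f x / ln x) at_top"
    using order_tendstoD(1)[OF log] c by simp
  ultimately have "eventually (\<lambda>x. p * ln x \<le> alpha_exponent a g f x) at_top"
    using t(2) eventually_gt_at_top[of 1]
  proof eventually_elim
    case (elim x)
    then have ln: "0 < ln x"
      by simp
    with elim(2) have pos: "0 < pot f x"
      by (simp add: zero_less_divide_iff)
    have "p * ln x \<le> k * pot f x"
      using elim(1) ln by (simp add: pos_less_divide_eq less_imp_le)
    also have "k * pot f x \<le> alpha_exponent a g f x"
      unfolding k_def using a pos elim(3) by (intro alpha_exponent_ge) auto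
    finally show ?case .
  qed
  from alpha_div_less_top_of_exponent_ge[OF a f g ratio p(1) this] show ?thesis .
qed

lemma alpha_div_eq_top_if_pot_over_ln_tendsto:
  assumes a: "a > 1" and f: "is_density f" and g: "is_density g"
    and c: "c > 1" and log: "((\<lambda>x. pot f x / ln x) \<longlongrightarrow> c) at_top"
    and lim: "((\<lambda>x. ereal (pot g x / pot f x)) \<longlongrightarrow> l) at_top"
    and l: "l < ereal ((a - 1) / a + 1 / (c * a))"
  shows "alpha_div a g f = \<infinity>"
proof -
  obtain t where t: "t < (a - 1) / a + 1 / (c * a)" "eventually (\<lambda>x. pot g x / pot f x < t) at_top"
    using eventually_lt_of_tendsto_ereal[OF lim l] by blast
  define k where "k = a * t - a + 1"
  have kc: "k * c < 1"
    using t(1) a c by (simp add: k_def field_simps)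
  obtain q where q: "k * c < q" "q < 1"
    using dense[OF kc] by blast
  have "eventually (\<lambda>x. 1 < pot f x / ln x) at_top"
    using order_tendstoD(1)[OF log c] .
  with eventually_gt_at_top[of 1]
  have pot_f: "eventually (\<lambda>x. ln x \<le> pot f x) at_top"
    by eventually_elim (simp add: pos_less_divide_eq less_imp_le)
  have "eventually (\<lambda>x. k * (pot f x / ln x) < q) at_top"
    using order_tendstoD(2)[OF tendsto_mult_left[OF log, of k] q(1)] .
  with pot_f t(2) eventually_gt_at_top[of 1]
  have "eventually (\<lambda>x. alpha_exponent a g f x \<le> q * ln x) at_top"
  proof eventually_elim
    case (elim x)
    then have ln: "0 < ln x"
      by simp
    with elim(1) have pos: "0 < pot f x"
      by linarith
    have "alpha_exponent a g f x \<le> k * pot f x"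
      unfolding k_def using a pos elim(2) by (intro alpha_exponent_le) auto
    also have "\<dots> \<le> q * ln x"
      using elim(4) ln by (simp add: pos_divide_less_eq less_imp_le)
    finally show ?case .
  qed
  from alpha_div_eq_top_of_exponent_le[OF a f g q(2) pot_f this] show ?thesis .
qed

theorem proposition3p3:
  fixes \<alpha> :: real
  assumes "\<alpha> > 1"
  shows
   "(\<forall>f g. is_density f \<and> (class_i f \<or> class_ii f) \<and> (\<exists>M. \<forall>x\<ge>0. f x \<le> M) \<and>
        is_density g \<and>
        (\<exists>L::ereal. ((\<lambda>x. ereal (pot f x / pot g x)) \<longlongrightarrow> L) at_top) \<and>
        ratio_locally_bounded g f \<longrightarrow>
        (\<forall>l::ereal. ((\<lambda>x. ereal (pot g x / pot f x)) \<longlongrightarrow> l) at_top \<longrightarrow>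
           (l > ereal ((\<alpha> - 1) / \<alpha>) \<longrightarrow> alpha_div \<alpha> g f < \<infinity>) \<and>
           (l < ereal ((\<alpha> - 1) / \<alpha>) \<longrightarrow> alpha_div \<alpha> g f = \<infinity>)))
    \<and>
    (\<forall>f g (c::real). is_density f \<and> class_iii f \<and> ((\<lambda>x. pot f x / ln x) \<longlongrightarrow> c) at_top \<and> c > 1 \<and>
        (\<exists>M. \<forall>x\<ge>0. f x \<le> M) \<and>
        is_density g \<and>
        (\<exists>L::ereal. ((\<lambda>x. ereal (pot f x / pot g x)) \<longlongrightarrow> L) at_top) \<and>
        ratio_locally_bounded g f \<longrightarrow>
        (\<forall>l::ereal. ((\<lambda>x. ereal (pot g x / pot f x)) \<longlongrightarrow> l) at_top \<longrightarrow>
           (l > ereal ((\<alpha> - 1) / \<alpha> + 1 / (c * \<alpha>)) \<longrightarrow> alpha_div \<alpha> g f < \<infinity>) \<and>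
           (l < ereal ((\<alpha> - 1) / \<alpha> + 1 / (c * \<alpha>)) \<longrightarrow> alpha_div \<alpha> g f = \<infinity>)))"
proof (intro conjI allI impI; elim conjE)
  fix f g l
  assume f: "is_density f" and g: "is_density g"
    and lim: "((\<lambda>x. ereal (pot g x / pot f x)) \<longlongrightarrow> l) at_top"
  show "alpha_div \<alpha> g f < \<infinity>"
    if "class_i f \<or> class_ii f" "ratio_locally_bounded g f" "ereal ((\<alpha> - 1) / \<alpha>) < l"
    using alpha_div_less_top_if_pot_over_ln_at_top[OF assms f g that(2)
        filterlim_pot_over_ln_at_top[OF that(1)] lim that(3)] .
  show "alpha_div \<alpha> g f = \<infinity>"
    if "class_i f \<or> class_ii f" "l < ereal ((\<alpha> - 1) / \<alpha>)"
    using alpha_div_eq_top_if_pot_over_ln_at_top[OF assms f g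
        filterlim_pot_over_ln_at_top[OF that(1)] lim that(2)] .
  fix c :: real
  assume c: "c > 1" and log: "((\<lambda>x. pot f x / ln x) \<longlongrightarrow> c) at_top"
  show "alpha_div \<alpha> g f < \<infinity>"
    if "ratio_locally_bounded g f" "ereal ((\<alpha> - 1) / \<alpha> + 1 / (c * \<alpha>)) < l"
    using alpha_div_less_top_if_pot_over_ln_tendsto[OF assms f g that(1) c log lim that(2)] .
  show "alpha_div \<alpha> g f = \<infinity>"
    if "l < ereal ((\<alpha> - 1) / \<alpha> + 1 / (c * \<alpha>))"
    using alpha_div_eq_top_if_pot_over_ln_tendsto[OF assms f g c log lim that] .
qed

end
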